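(* Let $\psi\in\mathbb{R}[x]$ be a polynomial of degree $\ge 3$ with $\psi=\psi^{(1)}\psi^{(2)}$, where $\psi^{(1)},\psi^{(2)}\in\mathbb{R}[x]$ are non-constant. If there exists a zero $x_0\in\mathbb{R}^d$ of $\psi^{(1)}$ of multiplicity $\ge 2$, then the Fischer operator $F_\psi$ is not surjective.
   Context: $\mathbb{R}[x]$ denotes the real polynomials in $d$ variables, $\Delta$ the Laplacian, and $F_\psi:\mathbb{R}[x]\to\mathbb{R}[x]$, $F_\psi(q)=\Delta(\psi q)$. The multiplicity of a zero $x_0$ of a polynomial $f$ is the largest natural number $N$ such that $\frac{\partial^\alpha}{\partial x^\alpha}f(x_0)=0$ for all $\alpha\in\mathbb{N}_0^d$ with $|\alpha|\le N-1$. *)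

theory Defs
  imports "HOL-Analysis.Analysis" "HOL-Library.Poly_Mapping"
begin

text \<open>Real polynomials in d variables, d = CARD('n), represented by their coefficients:
  a finitely supported map from monomial exponents (multi-indices of type 'n poly_mapping to nat) to reals.
  Multiplication is the convolution product of the library instance.\<close>

type_synonym 'n mpoly = "('n \<Rightarrow>\<^sub>0 nat) \<Rightarrow>\<^sub>0 real"

definition mpoly_eval :: "('n::finite) mpoly \<Rightarrow> ('n \<Rightarrow> real) \<Rightarrow> real" where
  "mpoly_eval p x = (\<Sum>\<alpha>\<in>Poly_Mapping.keys p. Poly_Mapping.lookup p \<alpha> * (\<Prod>i\<in>UNIV. x i ^ Poly_Mapping.lookup (\<alpha>::'n \<Rightarrow>\<^sub>0 nat) i))"

definition mpoly_degree :: "('n::finite) mpoly \<Rightarrow> nat" where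
  "mpoly_degree p = Max (insert 0 ((\<lambda>\<alpha>::'n \<Rightarrow>\<^sub>0 nat. \<Sum>i\<in>UNIV. Poly_Mapping.lookup \<alpha> i) ` Poly_Mapping.keys p))"

definition mpoly_pderiv :: "'n::finite \<Rightarrow> 'n mpoly \<Rightarrow> 'n mpoly" where
  "mpoly_pderiv i p =
     (\<Sum>\<alpha>\<in>Poly_Mapping.keys p. Poly_Mapping.single ((\<alpha>::'n \<Rightarrow>\<^sub>0 nat) - Poly_Mapping.single i 1)
                     (Poly_Mapping.lookup p \<alpha> * of_nat (Poly_Mapping.lookup \<alpha> i)))"

text \<open>Iterated partial derivative along a list of variables (a mixed partial
  derivative \<partial>^\<alpha> with |\<alpha>| = length of the list).\<close>
definition mpoly_pderivs :: "'n::finite list \<Rightarrow> 'n mpoly \<Rightarrow> 'n mpoly" where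
  "mpoly_pderivs is p = foldr mpoly_pderiv is p"

definition mpoly_laplacian :: "('n::finite) mpoly \<Rightarrow> 'n mpoly" where
  "mpoly_laplacian p = (\<Sum>i\<in>UNIV. mpoly_pderiv i (mpoly_pderiv i p))"

definition fischer_op :: "('n::finite) mpoly \<Rightarrow> 'n mpoly \<Rightarrow> 'n mpoly" where
  "fischer_op \<psi> q = mpoly_laplacian (\<psi> * q)"

definition vanishes_to_order :: "('n::finite) mpoly \<Rightarrow> ('n \<Rightarrow> real) \<Rightarrow> nat \<Rightarrow> bool" where
  "vanishes_to_order f x0 N \<longleftrightarrow>
     (\<forall>is::'n list. length is \<le> N - 1 \<longrightarrow> mpoly_eval (mpoly_pderivs is f) x0 = 0)"

definition zero_multiplicity :: "('n::finite) mpoly \<Rightarrow> ('n \<Rightarrow> real) \<Rightarrow> nat" where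
  "zero_multiplicity f x0 = (GREATEST N. vanishes_to_order f x0 N)"

end

theory Submission
  imports Defs "HOL-Library.Function_Algebras" "HOL-Computational_Algebra.Polynomial"
begin

text \<open>A double zero x0 of \<psi>1 makes F_\<psi>1 map the space of polynomials whose partial
  derivatives of order < N vanish at x0 into itself, for every N. This space has finite
  codimension, so if F_\<psi>1 is onto, the map it induces on the finite-dimensional quotient is onto,
  hence injective: an element of the kernel of F_\<psi>1 vanishes to every order at x0 and is
  therefore 0. Since F_\<psi> q = F_\<psi>1 (\<psi>2 q), surjectivity of F_\<psi> entails that of F_\<psi>1, and
  then F_\<psi>1 (\<psi>2 q) = F_\<psi>1 1 forces \<psi>2 q = 1, impossible for non-constant \<psi>2.\<close>

section \<open>Surjective endomorphisms and subspaces of finite codimension\<close>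

lemma (in vector_space_pair) surj_endomorphism_reflects_invariant_kernel:
  assumes F: "Vector_Spaces.linear s1 s1 F" and "surj F"
    and \<Phi>: "Vector_Spaces.linear s1 s2 \<Phi>" and "finite S" and "range \<Phi> \<subseteq> vs2.span S"
    and invariant: "\<And>u. \<Phi> u = 0 \<Longrightarrow> \<Phi> (F u) = 0"
    and "\<Phi> (F v) = 0"
  shows "\<Phi> v = 0"
proof (rule ccontr)
  assume "\<Phi> v \<noteq> 0"
  interpret F: Vector_Spaces.linear s1 s1 F by (rule F)
  interpret \<Phi>: Vector_Spaces.linear s1 s2 \<Phi> by (rule \<Phi>)
  interpret \<Phi>F: Vector_Spaces.linear s1 s2 "\<Phi> \<circ> F" using F \<Phi> by (rule Vector_Spaces.linear_compose)
  have "vs2.independent {\<Phi> v}" using \<open>\<Phi> v \<noteq> 0\<close> by simp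
  then obtain B where "{\<Phi> v} \<subseteq> B" "B \<subseteq> range \<Phi>" "vs2.independent B" "range \<Phi> \<subseteq> vs2.span B"
    using vs2.maximal_independent_subset_extend[of "{\<Phi> v}" "range \<Phi>"] by blast
  have "B \<subseteq> vs2.span S" using \<open>B \<subseteq> range \<Phi>\<close> \<open>range \<Phi> \<subseteq> vs2.span S\<close> by (rule order_trans)
  then have "finite B" using vs2.independent_span_bound[OF \<open>finite S\<close> \<open>vs2.independent B\<close>] by simp
  have dim_range: "vs2.dim (range \<Phi>) = card B"
    using vs2.basis_card_eq_dim[OF \<open>B \<subseteq> range \<Phi>\<close> \<open>range \<Phi> \<subseteq> vs2.span B\<close> \<open>vs2.independent B\<close>] ..
  have "\<Phi> v \<in> B" using \<open>{\<Phi> v} \<subseteq> B\<close> by simp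
  \<comment> \<open>Lift the basis B of range \<Phi> along \<Phi>, sending \<Phi> v to v: the images \<Phi> (F (p b)) then
    span range \<Phi>, but one of them is 0.\<close>
  obtain p where p: "\<And>b. b \<in> B \<Longrightarrow> \<Phi> (p b) = b" and "p (\<Phi> v) = v"
  proof -
    obtain p0 where "\<And>b. b \<in> B \<Longrightarrow> \<Phi> (p0 b) = b"
      using \<open>B \<subseteq> range \<Phi>\<close> by (metis f_inv_into_f subsetD)
    then show thesis by (intro that[of "p0(\<Phi> v := v)"]) auto
  qed
  have "range \<Phi> \<subseteq> vs2.span ((\<Phi> \<circ> F \<circ> p) ` (B - {\<Phi> v}))"
  proof
    fix w assume "w \<in> range \<Phi>"
    then obtain u where w: "w = \<Phi> (F u)" using \<open>surj F\<close> by (metis image_iff surjD)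
    have "\<Phi> ` p ` B = B" using p by force
    then have "\<Phi> u \<in> \<Phi> ` vs1.span (p ` B)"
      using \<open>range \<Phi> \<subseteq> vs2.span B\<close> by (metis \<Phi>.span_image rangeI subsetD)
    then obtain z where z: "z \<in> vs1.span (p ` B)" "\<Phi> u = \<Phi> z" by (metis imageE)
    have "\<Phi> (F (u - z)) = 0" using z by (intro invariant) (simp add: \<Phi>.diff)
    then have "w = (\<Phi> \<circ> F) z" using w by (simp add: F.diff \<Phi>.diff)
    also have "\<dots> \<in> vs2.span ((\<Phi> \<circ> F) ` p ` B)"
      unfolding \<Phi>F.span_image using z(1) by (rule imageI)
    also have "\<dots> \<subseteq> vs2.span (insert 0 ((\<Phi> \<circ> F \<circ> p) ` (B - {\<Phi> v})))"
      using \<open>p (\<Phi> v) = v\<close> \<open>\<Phi> (F v) = 0\<close> by (intro vs2.span_mono) auto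
    finally show "w \<in> vs2.span ((\<Phi> \<circ> F \<circ> p) ` (B - {\<Phi> v}))" by simp
  qed
  then have "card B \<le> card ((\<Phi> \<circ> F \<circ> p) ` (B - {\<Phi> v}))"
    using vs2.dim_le_card \<open>finite B\<close> dim_range by (metis finite_Diff finite_imageI)
  also have "\<dots> \<le> card (B - {\<Phi> v})" by (rule card_image_le) (simp add: \<open>finite B\<close>)
  also have "\<dots> < card B" using \<open>finite B\<close> \<open>\<Phi> v \<in> B\<close> by (rule card_Diff1_less)
  finally show False by simp
qed

lemma vector_space_poly_mapping_const_mult:
  "vector_space (\<lambda>c p. Poly_Mapping.single 0 c * (p :: 'a::monoid_add \<Rightarrow>\<^sub>0 'b::field))"
  by unfold_locales (simp_all add: distrib_left distrib_right single_add mult_single flip: mult.assoc)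

lemma vector_space_fun:
  "vector_space (\<lambda>c (f :: 'a \<Rightarrow> 'b::field) x. c * f x)"
  by unfold_locales (simp_all add: plus_fun_def distrib_left distrib_right mult.assoc)

section \<open>Linear extension from monomials\<close>

lemma poly_mapping_sum_single:
  fixes p :: "'a \<Rightarrow>\<^sub>0 'b::comm_monoid_add"
  shows "p = (\<Sum>k\<in>Poly_Mapping.keys p. Poly_Mapping.single k (Poly_Mapping.lookup p k))"
proof (rule poly_mapping_eqI)
  fix k'
  have "(\<Sum>k\<in>Poly_Mapping.keys p. Poly_Mapping.lookup (Poly_Mapping.single k (Poly_Mapping.lookup p k)) k')
      = (\<Sum>k\<in>Poly_Mapping.keys p. if k = k' then Poly_Mapping.lookup p k else 0)"
    by (rule sum.cong) (auto simp: lookup_single)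
  then show "Poly_Mapping.lookup p k' =
      Poly_Mapping.lookup (\<Sum>k\<in>Poly_Mapping.keys p. Poly_Mapping.single k (Poly_Mapping.lookup p k)) k'"
    by (simp add: lookup_sum in_keys_iff)
qed

lemma poly_mapping_single_induct [case_names zero add]:
  fixes p :: "'a \<Rightarrow>\<^sub>0 'b::comm_monoid_add"
  assumes "P 0" and "\<And>p k c. P p \<Longrightarrow> P (p + Poly_Mapping.single k c)"
  shows "P p"
proof -
  have "P (\<Sum>k\<in>K. Poly_Mapping.single k (g k))" if "finite K" for K g
    using that
  proof (induction K rule: finite_induct)
    case (insert k K)
    then show ?case using assms(2)[of _ k "g k"] by (simp add: add.commute[of "Poly_Mapping.single k (g k)"])
  qed (simp add: assms(1))
  then show ?thesis by (subst poly_mapping_sum_single) simp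
qed

definition poly_mapping_extend :: "('a \<Rightarrow> 'b::zero \<Rightarrow> 'c::comm_monoid_add) \<Rightarrow> ('a \<Rightarrow>\<^sub>0 'b) \<Rightarrow> 'c" where
  "poly_mapping_extend h p = (\<Sum>k\<in>Poly_Mapping.keys p. h k (Poly_Mapping.lookup p k))"

locale coeff_additive =
  fixes h :: "'a \<Rightarrow> 'b::comm_monoid_add \<Rightarrow> 'c::comm_monoid_add"
  assumes zero: "h k 0 = 0" and add: "h k (a + b) = h k a + h k b"
begin

lemma extend_superset:
  "finite K \<Longrightarrow> Poly_Mapping.keys p \<subseteq> K \<Longrightarrow> poly_mapping_extend h p = (\<Sum>k\<in>K. h k (Poly_Mapping.lookup p k))"
  unfolding poly_mapping_extend_def by (rule sum.mono_neutral_left) (auto simp: zero in_keys_iff)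

lemma extend_add: "poly_mapping_extend h (p + q) = poly_mapping_extend h p + poly_mapping_extend h q"
proof -
  let ?K = "Poly_Mapping.keys p \<union> Poly_Mapping.keys q"
  have "poly_mapping_extend h (p + q) = (\<Sum>k\<in>?K. h k (Poly_Mapping.lookup (p + q) k))"
    by (rule extend_superset) (auto simp: keys_add)
  also have "\<dots> = (\<Sum>k\<in>?K. h k (Poly_Mapping.lookup p k)) + (\<Sum>k\<in>?K. h k (Poly_Mapping.lookup q k))"
    by (simp add: lookup_add add sum.distrib)
  also have "\<dots> = poly_mapping_extend h p + poly_mapping_extend h q"
    using extend_superset[of ?K p] extend_superset[of ?K q] by simp
  finally show ?thesis .
qed

lemma extend_zero [simp]: "poly_mapping_extend h 0 = 0"
  by (simp add: poly_mapping_extend_def)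

lemma extend_single [simp]: "poly_mapping_extend h (Poly_Mapping.single k c) = h k c"
  by (cases "c = 0") (simp_all add: poly_mapping_extend_def zero)

end

lemma poly_mapping_extend_mult:
  fixes h :: "'a::comm_monoid_add \<Rightarrow> 'b::semiring_0 \<Rightarrow> 'c::semiring_0"
  assumes "coeff_additive h" and mult: "\<And>k l a b. h (k + l) (a * b) = h k a * h l b"
  shows "poly_mapping_extend h (p * q) = poly_mapping_extend h p * poly_mapping_extend h q"
proof -
  interpret coeff_additive h by fact
  have single_mult: "poly_mapping_extend h (Poly_Mapping.single k a * q) = h k a * poly_mapping_extend h q" for k a
    by (induction q rule: poly_mapping_single_induct) (simp_all add: distrib_left extend_add mult_single mult)
  show ?thesis
    by (induction p rule: poly_mapping_single_induct) (simp_all add: distrib_right extend_add single_mult)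
qed

section \<open>Evaluation and partial derivatives\<close>

definition monomial_eval :: "('n::finite \<Rightarrow>\<^sub>0 nat) \<Rightarrow> ('n \<Rightarrow> real) \<Rightarrow> real" where
  "monomial_eval \<alpha> x = (\<Prod>i\<in>UNIV. x i ^ Poly_Mapping.lookup \<alpha> i)"

lemma coeff_additive_eval: "coeff_additive (\<lambda>\<alpha> c. c * monomial_eval \<alpha> x)"
  by unfold_locales (simp_all add: distrib_right)

lemma mpoly_eval_extend: "mpoly_eval p x = poly_mapping_extend (\<lambda>\<alpha> c. c * monomial_eval \<alpha> x) p"
  by (simp add: mpoly_eval_def poly_mapping_extend_def monomial_eval_def)

lemma mpoly_eval_add: "mpoly_eval (p + q) x = mpoly_eval p x + mpoly_eval q x"
  by (simp add: mpoly_eval_extend coeff_additive.extend_add[OF coeff_additive_eval])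

lemma mpoly_eval_zero [simp]: "mpoly_eval 0 x = 0"
  by (simp add: mpoly_eval_def)

lemma mpoly_eval_sum: "mpoly_eval (sum f A) x = (\<Sum>a\<in>A. mpoly_eval (f a) x)"
  by (induction A rule: infinite_finite_induct) (auto simp: mpoly_eval_add)

lemma mpoly_eval_const [simp]: "mpoly_eval (Poly_Mapping.single 0 c) x = c"
  by (cases "c = 0") (simp_all add: mpoly_eval_def)

lemma mpoly_eval_mult: "mpoly_eval (p * q) x = mpoly_eval p x * mpoly_eval q x"
  unfolding mpoly_eval_extend
  by (rule poly_mapping_extend_mult[OF coeff_additive_eval])
     (simp add: monomial_eval_def lookup_add power_add prod.distrib)

abbreviation var_exp :: "'n \<Rightarrow> 'n \<Rightarrow>\<^sub>0 nat" where
  "var_exp i \<equiv> Poly_Mapping.single i 1"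

lemma coeff_additive_pderiv:
  "coeff_additive (\<lambda>\<alpha> c. Poly_Mapping.single (\<alpha> - var_exp i) (c * of_nat (Poly_Mapping.lookup \<alpha> i)) :: 'n mpoly)"
  by unfold_locales (simp_all add: distrib_right single_add)

lemma mpoly_pderiv_extend:
  "mpoly_pderiv i p =
     poly_mapping_extend
       (\<lambda>\<alpha> c. Poly_Mapping.single (\<alpha> - var_exp i) (c * of_nat (Poly_Mapping.lookup \<alpha> i))) p"
  by (simp add: mpoly_pderiv_def poly_mapping_extend_def)

lemma mpoly_pderiv_add: "mpoly_pderiv i (p + q) = mpoly_pderiv i p + mpoly_pderiv i q"
  unfolding mpoly_pderiv_extend by (rule coeff_additive.extend_add[OF coeff_additive_pderiv])

lemma mpoly_pderiv_zero [simp]: "mpoly_pderiv i 0 = 0"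
  unfolding mpoly_pderiv_extend by (rule coeff_additive.extend_zero[OF coeff_additive_pderiv])

lemma mpoly_pderiv_single:
  "mpoly_pderiv i (Poly_Mapping.single \<alpha> c) = Poly_Mapping.single (\<alpha> - var_exp i) (c * of_nat (Poly_Mapping.lookup \<alpha> i))"
  unfolding mpoly_pderiv_extend by (rule coeff_additive.extend_single[OF coeff_additive_pderiv])

lemma mpoly_pderiv_sum: "mpoly_pderiv i (sum f A) = (\<Sum>a\<in>A. mpoly_pderiv i (f a))"
  by (induction A rule: infinite_finite_induct) (auto simp: mpoly_pderiv_add)

lemma minus_var_exp_add:
  "Poly_Mapping.lookup \<alpha> i > 0 \<Longrightarrow> \<alpha> - var_exp i + \<beta> = \<alpha> + \<beta> - var_exp i"
  by (rule poly_mapping_eqI) (auto simp: lookup_add lookup_minus lookup_single when_def)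

lemma minus_var_exp_add_cancel:
  "Poly_Mapping.lookup \<alpha> i > 0 \<Longrightarrow> \<alpha> - var_exp i + var_exp i = \<alpha>"
  by (rule poly_mapping_eqI) (auto simp: lookup_add lookup_minus lookup_single when_def)

lemma mpoly_pderiv_single_mult_single:
  "mpoly_pderiv i (Poly_Mapping.single \<alpha> a * Poly_Mapping.single \<beta> b) =
   mpoly_pderiv i (Poly_Mapping.single \<alpha> a) * Poly_Mapping.single \<beta> b
     + Poly_Mapping.single \<alpha> a * mpoly_pderiv i (Poly_Mapping.single \<beta> b)"
proof -
  let ?m = "\<lambda>n. Poly_Mapping.single (\<alpha> + \<beta> - var_exp i) (a * b * of_nat n)"
  have left: "mpoly_pderiv i (Poly_Mapping.single \<alpha> a) * Poly_Mapping.single \<beta> b = ?m (Poly_Mapping.lookup \<alpha> i)"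
  proof (cases "Poly_Mapping.lookup \<alpha> i = 0")
    case False
    then have "\<alpha> - var_exp i + \<beta> = \<alpha> + \<beta> - var_exp i" by (intro minus_var_exp_add) simp
    then show ?thesis unfolding mpoly_pderiv_single mult_single by (simp add: mult_ac)
  qed (simp add: mpoly_pderiv_single)
  have right: "Poly_Mapping.single \<alpha> a * mpoly_pderiv i (Poly_Mapping.single \<beta> b) = ?m (Poly_Mapping.lookup \<beta> i)"
  proof (cases "Poly_Mapping.lookup \<beta> i = 0")
    case False
    then have "\<alpha> + (\<beta> - var_exp i) = \<alpha> + \<beta> - var_exp i"
      by (metis add.commute gr0I minus_var_exp_add)
    then show ?thesis unfolding mpoly_pderiv_single mult_single by (simp add: mult_ac)
  qed (simp add: mpoly_pderiv_single)
  show ?thesis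
    unfolding left right by (simp add: mult_single mpoly_pderiv_single lookup_add distrib_left flip: single_add)
qed

lemma mpoly_pderiv_mult: "mpoly_pderiv i (p * q) = mpoly_pderiv i p * q + p * mpoly_pderiv i q"
proof -
  have single_mult: "mpoly_pderiv i (Poly_Mapping.single \<alpha> a * q) =
      mpoly_pderiv i (Poly_Mapping.single \<alpha> a) * q + Poly_Mapping.single \<alpha> a * mpoly_pderiv i q" for \<alpha> a
    by (induction q rule: poly_mapping_single_induct)
       (simp_all add: mpoly_pderiv_add mpoly_pderiv_single_mult_single algebra_simps)
  show ?thesis
  proof (induction p rule: poly_mapping_single_induct)
    case (add p \<alpha> a)
    then show ?case by (simp add: distrib_right mpoly_pderiv_add single_mult)
  qed simp
qed

lemma mpoly_pderiv_const_mult: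
  "mpoly_pderiv i (Poly_Mapping.single 0 c * p) = Poly_Mapping.single 0 c * mpoly_pderiv i p"
  by (simp add: mpoly_pderiv_mult mpoly_pderiv_single)

lemma lookup_mpoly_pderiv:
  "Poly_Mapping.lookup (mpoly_pderiv i p) \<beta> = Poly_Mapping.lookup p (\<beta> + var_exp i) * of_nat (Poly_Mapping.lookup \<beta> i + 1)"
proof (induction p rule: poly_mapping_single_induct)
  case (add p \<alpha> c)
  have "Poly_Mapping.lookup (Poly_Mapping.single (\<alpha> - var_exp i) (c * of_nat (Poly_Mapping.lookup \<alpha> i))) \<beta>
      = Poly_Mapping.lookup (Poly_Mapping.single \<alpha> c) (\<beta> + var_exp i) * of_nat (Poly_Mapping.lookup \<beta> i + 1)"
  proof (cases "\<alpha> = \<beta> + var_exp i")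
    case False
    then have "\<alpha> - var_exp i \<noteq> \<beta> \<or> Poly_Mapping.lookup \<alpha> i = 0"
      by (metis gr0I minus_var_exp_add_cancel)
    then show ?thesis using False by (auto simp: lookup_single)
  qed (simp add: lookup_add)
  then show ?case using add by (simp add: mpoly_pderiv_add mpoly_pderiv_single lookup_add distrib_right)
qed simp

lemma mpoly_pderivs_Nil [simp]: "mpoly_pderivs [] p = p"
  by (simp add: mpoly_pderivs_def)

lemma mpoly_pderivs_Cons [simp]: "mpoly_pderivs (i # is) p = mpoly_pderiv i (mpoly_pderivs is p)"
  by (simp add: mpoly_pderivs_def)

lemma mpoly_pderivs_append: "mpoly_pderivs (is @ js) p = mpoly_pderivs is (mpoly_pderivs js p)"
  by (simp add: mpoly_pderivs_def)

lemma mpoly_pderivs_add: "mpoly_pderivs is (p + q) = mpoly_pderivs is p + mpoly_pderivs is q"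
  by (induction "is") (simp_all add: mpoly_pderiv_add)

lemma mpoly_pderivs_sum: "mpoly_pderivs is (sum f A) = (\<Sum>a\<in>A. mpoly_pderivs is (f a))"
  by (induction "is") (simp_all add: mpoly_pderiv_sum)

lemma mpoly_pderivs_const_mult:
  "mpoly_pderivs is (Poly_Mapping.single 0 c * p) = Poly_Mapping.single 0 c * mpoly_pderivs is p"
  by (induction "is") (simp_all add: mpoly_pderiv_const_mult)

lemma mpoly_pderivs_snoc_mult:
  "mpoly_pderivs (is @ [i]) (p * q) =
     mpoly_pderivs is (mpoly_pderiv i p * q) + mpoly_pderivs is (p * mpoly_pderiv i q)"
  by (simp add: mpoly_pderivs_append mpoly_pderiv_mult mpoly_pderivs_add)

fun pderivs_factor :: "'n list \<Rightarrow> ('n \<Rightarrow>\<^sub>0 nat) \<Rightarrow> real" where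
  "pderivs_factor [] \<beta> = 1"
| "pderivs_factor (i # is) \<beta> = pderivs_factor is (\<beta> + var_exp i) * of_nat (Poly_Mapping.lookup \<beta> i + 1)"

lemma pderivs_factor_pos: "pderivs_factor is \<beta> > 0"
  by (induction "is" arbitrary: \<beta>) auto

lemma lookup_mpoly_pderivs:
  "Poly_Mapping.lookup (mpoly_pderivs is p) \<beta> =
     Poly_Mapping.lookup p (\<beta> + sum_list (map var_exp is)) * pderivs_factor is \<beta>"
  by (induction "is" arbitrary: \<beta>) (simp_all add: lookup_mpoly_pderiv add.assoc)

section \<open>Jets at a point\<close>

definition mpoly_jet :: "nat \<Rightarrow> ('n::finite \<Rightarrow> real) \<Rightarrow> 'n mpoly \<Rightarrow> 'n list \<Rightarrow> real" where
  "mpoly_jet N x0 p is = (if length is < N then mpoly_eval (mpoly_pderivs is p) x0 else 0)"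

lemma mpoly_jet_eq_0_iff:
  "mpoly_jet N x0 p = 0 \<longleftrightarrow> (\<forall>is. length is < N \<longrightarrow> mpoly_eval (mpoly_pderivs is p) x0 = 0)"
  by (auto simp: mpoly_jet_def fun_eq_iff)

lemma mpoly_jet_pderiv:
  assumes "mpoly_jet N x0 p = 0"
  shows "mpoly_jet (N - 1) x0 (mpoly_pderiv i p) = 0"
  using assms by (auto simp: mpoly_jet_eq_0_iff simp flip: mpoly_pderivs_append[of _ "[i]", simplified])

lemma mpoly_jet_mult:
  assumes "mpoly_jet M x0 p = 0" and "mpoly_jet N x0 q = 0"
  shows "mpoly_jet (M + N) x0 (p * q) = 0"
proof -
  have "mpoly_eval (mpoly_pderivs is (p * q)) x0 = 0"
    if "length is < M + N" "mpoly_jet M x0 p = 0" "mpoly_jet N x0 q = 0" for "is" p q M N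
    using that
  proof (induction "is" arbitrary: p q M N rule: rev_induct)
    case Nil
    then show ?case unfolding mpoly_jet_eq_0_iff by (cases "M = 0") (auto simp: mpoly_eval_mult dest!: spec[of _ "[]"])
  next
    case (snoc i "is")
    have "mpoly_eval (mpoly_pderivs is (mpoly_pderiv i p * q)) x0 = 0"
      using snoc.prems by (intro snoc.IH[of "M - 1" N] mpoly_jet_pderiv) auto
    moreover have "mpoly_eval (mpoly_pderivs is (p * mpoly_pderiv i q)) x0 = 0"
      using snoc.prems by (intro snoc.IH[of M "N - 1"] mpoly_jet_pderiv) auto
    ultimately show ?case by (simp add: mpoly_pderivs_snoc_mult mpoly_eval_add)
  qed
  then show ?thesis using assms by (simp add: mpoly_jet_eq_0_iff)
qed

lemma mpoly_jet_laplacian: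
  assumes "mpoly_jet (N + 2) x0 p = 0"
  shows "mpoly_jet N x0 (mpoly_laplacian p) = 0"
proof -
  have "mpoly_pderivs is (mpoly_laplacian p) = (\<Sum>i\<in>UNIV. mpoly_pderivs (is @ [i, i]) p)" for "is"
    by (simp add: mpoly_laplacian_def mpoly_pderivs_sum mpoly_pderivs_append)
  then show ?thesis using assms by (simp add: mpoly_jet_eq_0_iff mpoly_eval_sum)
qed

global_interpretation mpoly_fun: vector_space_pair
  "\<lambda>c p. Poly_Mapping.single 0 c * (p :: ('n::finite) mpoly)" "\<lambda>(c::real) (f :: 'n list \<Rightarrow> real) x. c * f x"
  by (intro vector_space_pair.intro vector_space_poly_mapping_const_mult vector_space_fun)

lemma mpoly_jet_linear:
  "Vector_Spaces.linear (\<lambda>c p. Poly_Mapping.single 0 c * p) (\<lambda>c f x. c * f x) (mpoly_jet N x0)"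
  by unfold_locales
    (auto simp: mpoly_jet_def fun_eq_iff mpoly_pderivs_add mpoly_eval_add mpoly_pderivs_const_mult
      mpoly_eval_mult)

lemma sum_fun_apply: "(\<Sum>a\<in>A. f a) x = (\<Sum>a\<in>A. f a x)"
  by (induction A rule: infinite_finite_induct) simp_all

lemma mpoly_jet_finite_rank:
  "\<exists>S. finite S \<and> range (mpoly_jet N x0) \<subseteq> mpoly_fun.vs2.span S"
proof (intro exI conjI)
  let ?L = "{is :: 'a list. length is < N}"
  let ?\<delta> = "\<lambda>is js. if js = is then 1 else 0 :: real"
  have "finite ?L"
    using finite_lists_length_le[of "UNIV :: 'a set" N] by (rule finite_subset[rotated]) auto
  then show "finite (?\<delta> ` ?L)" by simp
  show "range (mpoly_jet N x0) \<subseteq> mpoly_fun.vs2.span (?\<delta> ` ?L)"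
  proof
    fix f assume "f \<in> range (mpoly_jet N x0)"
    then have f_outside: "f js = 0" if "\<not> length js < N" for js
      using that by (auto simp: mpoly_jet_def)
    have "f = (\<Sum>is\<in>?L. (\<lambda>js. f is * ?\<delta> is js))"
    proof
      fix js
      have "(\<Sum>is\<in>?L. f is * ?\<delta> is js) = f js"
        using \<open>finite ?L\<close> f_outside by (cases "length js < N") (simp_all add: if_distrib cong: if_cong)
      then show "f js = (\<Sum>is\<in>?L. (\<lambda>js. f is * ?\<delta> is js)) js" by (simp add: sum_fun_apply)
    qed
    also have "\<dots> \<in> mpoly_fun.vs2.span (?\<delta> ` ?L)"
      by (intro mpoly_fun.vs2.span_sum mpoly_fun.vs2.span_scale mpoly_fun.vs2.span_base) simp
    finally show "f \<in> mpoly_fun.vs2.span (?\<delta> ` ?L)" .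
  qed
qed

definition monomial_degree :: "('n::finite \<Rightarrow>\<^sub>0 nat) \<Rightarrow> nat" where
  "monomial_degree \<alpha> = (\<Sum>i\<in>UNIV. Poly_Mapping.lookup \<alpha> i)"

lemma mpoly_degree_eq_Max: "mpoly_degree p = Max (insert 0 (monomial_degree ` Poly_Mapping.keys p))"
  by (simp add: mpoly_degree_def monomial_degree_def)

lemma monomial_degree_add: "monomial_degree (\<alpha> + \<beta>) = monomial_degree \<alpha> + monomial_degree \<beta>"
  by (simp add: monomial_degree_def lookup_add sum.distrib)

lemma monomial_degree_eq_0_iff: "monomial_degree \<alpha> = 0 \<longleftrightarrow> \<alpha> = 0"
  by (auto simp: monomial_degree_def poly_mapping_eq_iff fun_eq_iff)

lemma monomial_degree_single [simp]: "monomial_degree (Poly_Mapping.single i n) = n"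
  by (simp add: monomial_degree_def lookup_single when_def)

lemma monomial_degree_sum_var_exp: "monomial_degree (sum_list (map var_exp is)) = length is"
  by (induction "is") (simp_all add: monomial_degree_add monomial_degree_eq_0_iff)

lemma ex_sum_var_exp: "\<exists>is. sum_list (map var_exp is) = (\<alpha> :: 'n::finite \<Rightarrow>\<^sub>0 nat)"
proof (induction "monomial_degree \<alpha>" arbitrary: \<alpha>)
  case 0
  then show ?case by (intro exI[of _ "[]"]) (simp add: monomial_degree_eq_0_iff)
next
  case (Suc n)
  then obtain i where i: "Poly_Mapping.lookup \<alpha> i > 0"
    by (metis gr0I monomial_degree_eq_0_iff nat.distinct(1) poly_mapping_eqI lookup_zero)
  have "monomial_degree (\<alpha> - var_exp i) = n"
    using Suc(2) monomial_degree_add[of "\<alpha> - var_exp i" "var_exp i"] minus_var_exp_add_cancel[OF i]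
    by simp
  then obtain "is" where "sum_list (map var_exp is) = \<alpha> - var_exp i" using Suc(1) by blast
  then show ?case using minus_var_exp_add_cancel[OF i] by (intro exI[of _ "i # is"]) (simp add: add.commute)
qed

lemma mpoly_pderivs_top_degree:
  fixes p :: "('n::finite) mpoly"
  assumes "p \<noteq> 0"
  obtains "is" where "length is = mpoly_degree p" "mpoly_eval (mpoly_pderivs is p) y \<noteq> 0"
proof -
  let ?K = "Poly_Mapping.keys p"
  have "?K \<noteq> {}" using assms by simp
  then have "mpoly_degree p \<in> monomial_degree ` ?K"
    by (simp add: mpoly_degree_eq_Max)
  then obtain \<alpha> where \<alpha>: "\<alpha> \<in> ?K" "monomial_degree \<alpha> = mpoly_degree p" by auto
  have top: "monomial_degree \<beta> \<le> monomial_degree \<alpha>" if "\<beta> \<in> ?K" for \<beta>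
    using that \<alpha>(2) by (simp add: mpoly_degree_eq_Max)
  obtain "is" where "is": "sum_list (map var_exp is) = \<alpha>" using ex_sum_var_exp by blast
  \<comment> \<open>Differentiating along \<alpha> kills every other monomial, since none has larger degree.\<close>
  have "mpoly_pderivs is p = Poly_Mapping.single 0 (Poly_Mapping.lookup p \<alpha> * pderivs_factor is 0)"
  proof (rule poly_mapping_eqI)
    fix \<beta>
    show "Poly_Mapping.lookup (mpoly_pderivs is p) \<beta> =
        Poly_Mapping.lookup (Poly_Mapping.single 0 (Poly_Mapping.lookup p \<alpha> * pderivs_factor is 0)) \<beta>"
    proof (cases "\<beta> = 0")
      case False
      then have "\<beta> + \<alpha> \<notin> ?K"
        using top[of "\<beta> + \<alpha>"] by (auto simp: monomial_degree_add monomial_degree_eq_0_iff)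
      then show ?thesis using False unfolding lookup_mpoly_pderivs "is" by (simp add: in_keys_iff lookup_single)
    qed (unfold lookup_mpoly_pderivs "is", simp)
  qed
  moreover have "Poly_Mapping.lookup p \<alpha> \<noteq> 0" using \<alpha> by (simp add: in_keys_iff)
  moreover have "length is = mpoly_degree p"
    using monomial_degree_sum_var_exp[of "is"] "is" \<alpha>(2) by simp
  ultimately show thesis using pderivs_factor_pos[of "is" 0] by (intro that) auto
qed

lemma mpoly_eq_0_if_jet_eq_0:
  assumes "mpoly_jet (Suc (mpoly_degree p)) x0 p = 0"
  shows "p = 0"
proof (rule ccontr)
  assume "p \<noteq> 0"
  then obtain "is" where "length is = mpoly_degree p" "mpoly_eval (mpoly_pderivs is p) x0 \<noteq> 0"
    by (rule mpoly_pderivs_top_degree)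
  then show False using assms by (simp add: mpoly_jet_eq_0_iff)
qed

lemma mpoly_jet_zero_multiplicity:
  assumes "p \<noteq> 0" and "mpoly_eval p x0 = 0"
  shows "mpoly_jet (zero_multiplicity p x0) x0 p = 0"
proof -
  have bounded: "N \<le> Suc (mpoly_degree p)" if "vanishes_to_order p x0 N" for N
  proof (rule ccontr)
    assume "\<not> N \<le> Suc (mpoly_degree p)"
    moreover obtain "is" where "length is = mpoly_degree p" "mpoly_eval (mpoly_pderivs is p) x0 \<noteq> 0"
      using \<open>p \<noteq> 0\<close> by (rule mpoly_pderivs_top_degree)
    ultimately show False using that by (auto simp: vanishes_to_order_def)
  qed
  have "vanishes_to_order p x0 0" using assms(2) by (simp add: vanishes_to_order_def)
  then have "vanishes_to_order p x0 (zero_multiplicity p x0)"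
    unfolding zero_multiplicity_def using bounded by (rule GreatestI_nat)
  then show ?thesis by (auto simp: vanishes_to_order_def mpoly_jet_eq_0_iff)
qed

section \<open>Units are constants\<close>

lemma horner_sum_add: "horner_sum (\<lambda>x. f x + g x) B xs = horner_sum f B xs + horner_sum g B xs"
  by (induction xs) (simp_all add: algebra_simps)

lemma horner_sum_digits_inj:
  fixes f g :: "'a \<Rightarrow> nat"
  assumes "\<forall>x\<in>set xs. f x < B" and "\<forall>x\<in>set xs. g x < B"
    and "horner_sum f B xs = horner_sum g B xs"
  shows "\<forall>x\<in>set xs. f x = g x"
  using assms
proof (induction xs)
  case (Cons x xs)
  have eq: "f x + B * horner_sum f B xs = g x + B * horner_sum g B xs"
    using Cons.prems(3) by simp
  have "f x < B" "g x < B" using Cons.prems(1,2) by simp_all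
  then have "f x = g x"
    using arg_cong[OF eq, of "\<lambda>n. n mod B"] by simp
  have "horner_sum f B xs = horner_sum g B xs"
    using eq \<open>f x = g x\<close> \<open>f x < B\<close> by simp
  moreover have "\<forall>x\<in>set xs. f x < B" "\<forall>x\<in>set xs. g x < B" using Cons.prems(1,2) by simp_all
  ultimately have "\<forall>y\<in>set xs. f y = g y" using Cons.IH by blast
  with \<open>f x = g x\<close> show ?case by simp
qed simp

\<comment> \<open>Kronecker substitution: the variable xs ! k is sent to X ^ (B ^ k).\<close>
definition kronecker_exp :: "nat \<Rightarrow> 'n list \<Rightarrow> ('n \<Rightarrow>\<^sub>0 nat) \<Rightarrow> nat" where
  "kronecker_exp B xs \<alpha> = horner_sum (Poly_Mapping.lookup \<alpha>) B xs"

definition kronecker_subst :: "nat \<Rightarrow> 'n list \<Rightarrow> 'n mpoly \<Rightarrow> real poly" where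
  "kronecker_subst B xs = poly_mapping_extend (\<lambda>\<alpha> c. monom c (kronecker_exp B xs \<alpha>))"

lemma kronecker_exp_add: "kronecker_exp B xs (\<alpha> + \<beta>) = kronecker_exp B xs \<alpha> + kronecker_exp B xs \<beta>"
  unfolding kronecker_exp_def lookup_add by (rule horner_sum_add)

lemma kronecker_exp_zero [simp]: "kronecker_exp B xs 0 = 0"
  by (induction xs) (simp_all add: kronecker_exp_def)

lemma kronecker_exp_inj:
  assumes "set xs = UNIV" and "\<And>i. Poly_Mapping.lookup \<alpha> i < B" and "\<And>i. Poly_Mapping.lookup \<beta> i < B"
    and "kronecker_exp B xs \<alpha> = kronecker_exp B xs \<beta>"
  shows "\<alpha> = \<beta>"
proof (rule poly_mapping_eqI)
  fix i
  have "\<forall>i\<in>set xs. Poly_Mapping.lookup \<alpha> i = Poly_Mapping.lookup \<beta> i"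
    using assms(2-4) by (intro horner_sum_digits_inj) (simp_all add: kronecker_exp_def)
  then show "Poly_Mapping.lookup \<alpha> i = Poly_Mapping.lookup \<beta> i" using assms(1) by blast
qed

lemma coeff_additive_kronecker: "coeff_additive (\<lambda>\<alpha> c. monom c (kronecker_exp B xs \<alpha>))"
  by unfold_locales (simp_all add: add_monom)

lemma kronecker_subst_mult: "kronecker_subst B xs (p * q) = kronecker_subst B xs p * kronecker_subst B xs q"
  unfolding kronecker_subst_def
  by (rule poly_mapping_extend_mult[OF coeff_additive_kronecker]) (simp add: mult_monom kronecker_exp_add)

lemma kronecker_subst_1 [simp]: "kronecker_subst B xs 1 = 1"
  unfolding kronecker_subst_def single_one[symmetric] coeff_additive.extend_single[OF coeff_additive_kronecker]
  by simp

lemma coeff_kronecker_subst: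
  "coeff (kronecker_subst B xs p) n =
     (\<Sum>\<alpha>\<in>Poly_Mapping.keys p. if kronecker_exp B xs \<alpha> = n then Poly_Mapping.lookup p \<alpha> else 0)"
  by (simp add: kronecker_subst_def poly_mapping_extend_def coeff_sum)

lemma mpoly_degree_eq_0_if_mult_eq_1:
  fixes p q :: "('n::finite) mpoly"
  assumes "p * q = 1"
  shows "mpoly_degree p = 0"
proof -
  obtain xs :: "'n list" where "set xs = UNIV" using finite_list[of "UNIV :: 'n set"] by auto
  \<comment> \<open>Exponents of p are digits in base B, so the substitution separates the monomials of p.\<close>
  define B where "B = Suc (\<Sum>\<alpha>\<in>Poly_Mapping.keys p. monomial_degree \<alpha>)"
  have digit: "Poly_Mapping.lookup \<alpha> i < B" if "\<alpha> \<in> Poly_Mapping.keys p" for \<alpha> i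
  proof -
    have "Poly_Mapping.lookup \<alpha> i \<le> monomial_degree \<alpha>"
      unfolding monomial_degree_def by (rule member_le_sum) simp_all
    also have "\<dots> \<le> (\<Sum>\<alpha>\<in>Poly_Mapping.keys p. monomial_degree \<alpha>)"
      using that by (intro member_le_sum) simp_all
    finally show ?thesis by (simp add: B_def)
  qed
  have "kronecker_subst B xs p * kronecker_subst B xs q = 1"
    by (simp add: assms flip: kronecker_subst_mult)
  then have "degree (kronecker_subst B xs p) = 0"
    using degree_mult_eq[of "kronecker_subst B xs p" "kronecker_subst B xs q"] by fastforce
  have "Poly_Mapping.keys p \<subseteq> {0}"
  proof
    fix \<alpha> assume \<alpha>: "\<alpha> \<in> Poly_Mapping.keys p"
    have "coeff (kronecker_subst B xs p) (kronecker_exp B xs \<alpha>) =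
        (\<Sum>\<beta>\<in>Poly_Mapping.keys p. if \<beta> = \<alpha> then Poly_Mapping.lookup p \<beta> else 0)"
      unfolding coeff_kronecker_subst
      by (rule sum.cong) (use kronecker_exp_inj[OF \<open>set xs = UNIV\<close> digit digit] \<alpha> in auto)
    also have "\<dots> \<noteq> 0" using \<alpha> by (simp add: in_keys_iff)
    finally have "kronecker_exp B xs \<alpha> \<le> degree (kronecker_subst B xs p)"
      by (rule le_degree)
    then have "kronecker_exp B xs \<alpha> = kronecker_exp B xs 0"
      using \<open>degree (kronecker_subst B xs p) = 0\<close> by simp
    then show "\<alpha> \<in> {0}"
      using kronecker_exp_inj[OF \<open>set xs = UNIV\<close> digit[OF \<alpha>]] by (simp add: B_def)
  qed
  then have "insert 0 (monomial_degree ` Poly_Mapping.keys p) = {0}"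
    by (auto simp: monomial_degree_eq_0_iff)
  then show ?thesis by (metis Max_singleton mpoly_degree_eq_Max)
qed

section \<open>The Fischer operator\<close>

lemma mpoly_laplacian_add: "mpoly_laplacian (p + q) = mpoly_laplacian p + mpoly_laplacian q"
  by (simp add: mpoly_laplacian_def mpoly_pderiv_add sum.distrib)

lemma mpoly_laplacian_const_mult:
  "mpoly_laplacian (Poly_Mapping.single 0 c * p) = Poly_Mapping.single 0 c * mpoly_laplacian p"
  by (simp add: mpoly_laplacian_def mpoly_pderiv_const_mult sum_distrib_left)

lemma fischer_op_linear:
  "Vector_Spaces.linear (\<lambda>c p. Poly_Mapping.single 0 c * p) (\<lambda>c p. Poly_Mapping.single 0 c * p) (fischer_op \<phi>)"
  by unfold_locales
    (simp_all add: fischer_op_def distrib_left mpoly_laplacian_add mult.left_commute[of \<phi>]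
      mpoly_laplacian_const_mult)

lemma fischer_op_mult: "fischer_op (\<phi> * \<theta>) q = fischer_op \<phi> (\<theta> * q)"
  by (simp add: fischer_op_def mult.assoc)

lemma surj_fischer_op_factor:
  assumes "surj (fischer_op (\<phi> * \<theta>))"
  shows "surj (fischer_op \<phi>)"
  using assms unfolding surj_def fischer_op_mult by blast

lemma fischer_op_preserves_jet_kernel:
  assumes "mpoly_jet 2 x0 \<phi> = 0" and "mpoly_jet N x0 q = 0"
  shows "mpoly_jet N x0 (fischer_op \<phi> q) = 0"
  unfolding fischer_op_def using mpoly_jet_mult[OF assms] by (intro mpoly_jet_laplacian) (simp add: add.commute)

lemma inj_fischer_op_if_surj:
  assumes "mpoly_jet 2 x0 \<phi> = 0" and "surj (fischer_op \<phi>)"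
  shows "inj (fischer_op \<phi>)"
proof -
  interpret F: Vector_Spaces.linear "\<lambda>c p. Poly_Mapping.single 0 c * p" "\<lambda>c p. Poly_Mapping.single 0 c * p"
    "fischer_op \<phi>"
    by (rule fischer_op_linear)
  have "v = 0" if "fischer_op \<phi> v = 0" for v
  proof (rule mpoly_eq_0_if_jet_eq_0)
    let ?\<Phi> = "mpoly_jet (Suc (mpoly_degree v)) x0"
    interpret \<Phi>: Vector_Spaces.linear "\<lambda>c p. Poly_Mapping.single 0 c * p" "\<lambda>c f x. c * f x" ?\<Phi>
      by (rule mpoly_jet_linear)
    obtain S where "finite S" "range ?\<Phi> \<subseteq> mpoly_fun.vs2.span S"
      using mpoly_jet_finite_rank by blast
    moreover have "?\<Phi> (fischer_op \<phi> v) = 0" using that \<Phi>.zero by simp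
    ultimately show "?\<Phi> v = 0"
      using mpoly_fun.surj_endomorphism_reflects_invariant_kernel[OF fischer_op_linear assms(2) mpoly_jet_linear]
        fischer_op_preserves_jet_kernel[OF assms(1)]
      by blast
  qed
  then show ?thesis by (simp add: F.inj_iff_eq_0)
qed

theorem mainTheorem7:
  fixes \<psi> \<psi>1 \<psi>2 :: "('n::finite) mpoly" and x0 :: "'n \<Rightarrow> real"
  assumes "mpoly_degree \<psi> \<ge> 3"
    and "\<psi> = \<psi>1 * \<psi>2"
    and "mpoly_degree \<psi>1 \<ge> 1" and "mpoly_degree \<psi>2 \<ge> 1"
    and "mpoly_eval \<psi>1 x0 = 0"
    and "zero_multiplicity \<psi>1 x0 \<ge> 2"
  shows "\<not> surj (fischer_op \<psi>)"
proof
  assume "surj (fischer_op \<psi>)"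
  then have surj1: "surj (fischer_op \<psi>1)" unfolding \<open>\<psi> = \<psi>1 * \<psi>2\<close> by (rule surj_fischer_op_factor)
  have "\<psi>1 \<noteq> 0" using \<open>mpoly_degree \<psi>1 \<ge> 1\<close> by (intro notI) (simp add: mpoly_degree_eq_Max)
  then have "mpoly_jet (zero_multiplicity \<psi>1 x0) x0 \<psi>1 = 0"
    using \<open>mpoly_eval \<psi>1 x0 = 0\<close> by (rule mpoly_jet_zero_multiplicity)
  then have "mpoly_jet 2 x0 \<psi>1 = 0"
    using \<open>zero_multiplicity \<psi>1 x0 \<ge> 2\<close> by (auto simp: mpoly_jet_eq_0_iff)
  then have "inj (fischer_op \<psi>1)" using surj1 by (rule inj_fischer_op_if_surj)
  \<comment> \<open>Solving F_\<psi> q = F_\<psi>1 1 exhibits \<psi>2 as a unit.\<close>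
  obtain q where "fischer_op \<psi>1 1 = fischer_op \<psi> q" using surjD[OF \<open>surj (fischer_op \<psi>)\<close>] by blast
  then have "\<psi>2 * q = 1"
    using \<open>inj (fischer_op \<psi>1)\<close> by (simp add: \<open>\<psi> = \<psi>1 * \<psi>2\<close> fischer_op_mult inj_eq)
  then have "mpoly_degree \<psi>2 = 0" by (rule mpoly_degree_eq_0_if_mult_eq_1)
  with \<open>mpoly_degree \<psi>2 \<ge> 1\<close> show False by simp
qed

end
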